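(* Assume $h_0$ satisfies Case I or Case II. Let $c_1>0$ be a constant such that $G(\beta,\gamma)\le c_1/\beta^3-F$ for all $\beta>0$, $\gamma\ge0$. Define $E_1(\beta,\gamma)=\frac12\gamma^2+F\beta$ and $E_2(\beta,\gamma)=\frac12\gamma^2+F\beta+\frac{c_1}{2\beta^2}$ for $\beta>0$, $\gamma\in\mathbb{R}$. Let $\eta$ be the solution of $\eta''=G(\eta,\eta')$, $\eta(0)=\eta_0>0$, $\eta'(0)=\eta_1$ on its maximal interval $[0,T[$. Then for every $t\in[0,T[$: (i) $\frac{d}{dt}E_1(\eta(t),\eta'(t))\le0$ if $\eta'(t)\le0$; (ii) $\frac{d}{dt}E_2(\eta(t),\eta'(t))\le0$ if $\eta'(t)\ge0$.
   Context: Let $\Omega\subset\mathbb{R}^2$ be a bounded open set with regular boundary and $0\in\Omega$. Let $h_0\in C^1(\bar\Omega)$ with $h_0\ge 0$ and $\min_{\Omega}h_0=h_0(0)=0$. Let $F>0$, $K=\{\varphi\in H^1_0(\Omega):\varphi\ge 0\}$. For $\beta>0$, $\gamma\in\mathbb{R}$, let $q\in K$ be the unique solution of $\int_\Omega (h_0+\beta)^3\nabla q\cdot\nabla(\varphi-q)\ge \int_\Omega h_0\,\partial_{x_1}(\varphi-q)-\gamma\int_\Omega(\varphi-q)$ for all $\varphi\in K$, and set $G(\beta,\gamma)=\int_\Omega q\,dx-F$ (such a constant $c_1$ exists). Case I (line contact): $h_0(0,x_2)=0$ whenever $(0,x_2)\in\Omega$, $h_0(x_1,x_2)>0$ for $x_1\neq0$,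 and there exist $\alpha\ge1$, a neighborhood $W$ of $0$ and a regular function $h_1>0$ on $\bar W$ with $h_0=|x_1|^\alpha h_1$ on $W$. Case II (point contact): $h_0(x)>0$ for $x\neq0$, and there exist $\alpha\ge1$, a neighborhood $W$ of $0$ and a regular $h_1>0$ on $\bar W$ with $h_0(x)=|x|^\alpha h_1(x)$ on $W$. *)

theory Defs
  imports "HOL-Analysis.Analysis"
begin

type_synonym R2 = "real \<times> real"

definition C1_on :: "R2 set \<Rightarrow> (R2 \<Rightarrow> real) \<Rightarrow> bool" where
  "C1_on U f \<longleftrightarrow> (\<exists>D. (\<forall>x\<in>U. (f has_derivative D x) (at x)) \<and>
      continuous_on U (\<lambda>x. D x (1,0)) \<and> continuous_on U (\<lambda>x. D x (0,1)))"

definition C1_closure :: "R2 set \<Rightarrow> (R2 \<Rightarrow> real) \<Rightarrow> bool" where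
  "C1_closure U f \<longleftrightarrow> continuous_on (closure U) f \<and>
     (\<exists>D. (\<forall>x\<in>U. (f has_derivative D x) (at x)) \<and>
      continuous_on (closure U) (\<lambda>x. D x (1,0)) \<and> continuous_on (closure U) (\<lambda>x. D x (0,1)))"

definition C1_boundary :: "R2 set \<Rightarrow> bool" where
  "C1_boundary \<Omega> \<longleftrightarrow> (\<forall>p\<in>frontier \<Omega>. \<exists>U (\<psi>::R2 \<Rightarrow> real) D. open U \<and> p \<in> U \<and>
      (\<forall>x\<in>U. (\<psi> has_derivative D x) (at x)) \<and>
      continuous_on U (\<lambda>x. D x (1,0)) \<and> continuous_on U (\<lambda>x. D x (0,1)) \<and>
      (\<forall>x\<in>U. D x \<noteq> (\<lambda>v. 0)) \<and>
      \<Omega> \<inter> U = {x\<in>U. \<psi> x < 0})"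

definition test_fun :: "R2 set \<Rightarrow> (R2 \<Rightarrow> real) \<Rightarrow> (R2 \<Rightarrow> R2) \<Rightarrow> bool" where
  "test_fun \<Omega> \<psi> g \<longleftrightarrow> (\<exists>D. (\<forall>x. (\<psi> has_derivative D x) (at x)) \<and>
      (\<forall>x. g x = (D x (1,0), D x (0,1))) \<and> continuous_on UNIV g \<and>
      (\<exists>K. compact K \<and> K \<subseteq> \<Omega> \<and> (\<forall>x. x \<notin> K \<longrightarrow> \<psi> x = 0)))"

definition L2_on :: "R2 set \<Rightarrow> (R2 \<Rightarrow> real) \<Rightarrow> bool" where
  "L2_on \<Omega> f \<longleftrightarrow> set_borel_measurable lebesgue \<Omega> f \<and>
      set_integrable lebesgue \<Omega> (\<lambda>x. (f x)^2)"

definition weak_grad :: "R2 set \<Rightarrow> (R2 \<Rightarrow> real) \<Rightarrow> (R2 \<Rightarrow> R2) \<Rightarrow> bool" where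
  "weak_grad \<Omega> \<phi> g \<longleftrightarrow> L2_on \<Omega> \<phi> \<and> L2_on \<Omega> (\<lambda>x. fst (g x)) \<and> L2_on \<Omega> (\<lambda>x. snd (g x)) \<and>
     (\<forall>\<psi> g\<psi>. test_fun \<Omega> \<psi> g\<psi> \<longrightarrow>
        (\<integral>x\<in>\<Omega>. \<phi> x * fst (g\<psi> x) \<partial>lebesgue) = - (\<integral>x\<in>\<Omega>. fst (g x) * \<psi> x \<partial>lebesgue) \<and>
        (\<integral>x\<in>\<Omega>. \<phi> x * snd (g\<psi> x) \<partial>lebesgue) = - (\<integral>x\<in>\<Omega>. snd (g x) * \<psi> x \<partial>lebesgue))"

text \<open>\<phi> \<in> H^1_0(\<Omega>) with weak gradient g: \<phi> has weak gradient g and is an H^1-limit of test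
  functions (closure of C^1_c(\<Omega>) in H^1, which equals H^1_0(\<Omega>)).\<close>
definition H10 :: "R2 set \<Rightarrow> (R2 \<Rightarrow> real) \<Rightarrow> (R2 \<Rightarrow> R2) \<Rightarrow> bool" where
  "H10 \<Omega> \<phi> g \<longleftrightarrow> weak_grad \<Omega> \<phi> g \<and>
     (\<exists>\<psi> g\<psi>. (\<forall>n. test_fun \<Omega> (\<psi> n) (g\<psi> n)) \<and>
        ((\<lambda>n. \<integral>x\<in>\<Omega>. (\<psi> n x - \<phi> x)^2 \<partial>lebesgue) \<longlonglongrightarrow> 0) \<and>
        ((\<lambda>n. \<integral>x\<in>\<Omega>. (fst (g\<psi> n x) - fst (g x))^2 + (snd (g\<psi> n x) - snd (g x))^2 \<partial>lebesgue)
            \<longlonglongrightarrow> 0))"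

definition in_K :: "R2 set \<Rightarrow> (R2 \<Rightarrow> real) \<Rightarrow> (R2 \<Rightarrow> R2) \<Rightarrow> bool" where
  "in_K \<Omega> \<phi> g \<longleftrightarrow> H10 \<Omega> \<phi> g \<and> (AE x in lebesgue. x \<in> \<Omega> \<longrightarrow> \<phi> x \<ge> 0)"

definition VI_sol :: "R2 set \<Rightarrow> (R2 \<Rightarrow> real) \<Rightarrow> real \<Rightarrow> real \<Rightarrow> (R2 \<Rightarrow> real) \<Rightarrow> bool" where
  "VI_sol \<Omega> h0 \<beta> \<gamma> q \<longleftrightarrow> (\<exists>gq. in_K \<Omega> q gq \<and>
     (\<forall>\<phi> g\<phi>. in_K \<Omega> \<phi> g\<phi> \<longrightarrow>
        (\<integral>x\<in>\<Omega>. (h0 x + \<beta>)^3 * (fst (gq x) * (fst (g\<phi> x) - fst (gq x))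
                    + snd (gq x) * (snd (g\<phi> x) - snd (gq x))) \<partial>lebesgue)
        \<ge> (\<integral>x\<in>\<Omega>. h0 x * (fst (g\<phi> x) - fst (gq x)) \<partial>lebesgue)
          - \<gamma> * (\<integral>x\<in>\<Omega>. \<phi> x - q x \<partial>lebesgue)))"

definition case_I :: "R2 set \<Rightarrow> (R2 \<Rightarrow> real) \<Rightarrow> bool" where
  "case_I \<Omega> h0 \<longleftrightarrow> (\<forall>x2. (0, x2) \<in> \<Omega> \<longrightarrow> h0 (0, x2) = 0) \<and>
     (\<forall>x\<in>closure \<Omega>. fst x \<noteq> 0 \<longrightarrow> h0 x > 0) \<and>
     (\<exists>\<alpha> W h1. \<alpha> \<ge> 1 \<and> open W \<and> (0::R2) \<in> W \<and> W \<subseteq> \<Omega> \<and> C1_closure W h1 \<and>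
        (\<forall>x\<in>closure W. h1 x > 0) \<and> (\<forall>x\<in>W. h0 x = \<bar>fst x\<bar> powr \<alpha> * h1 x))"

definition case_II :: "R2 set \<Rightarrow> (R2 \<Rightarrow> real) \<Rightarrow> bool" where
  "case_II \<Omega> h0 \<longleftrightarrow> (\<forall>x\<in>closure \<Omega>. x \<noteq> 0 \<longrightarrow> h0 x > 0) \<and>
     (\<exists>\<alpha> W h1. \<alpha> \<ge> 1 \<and> open W \<and> (0::R2) \<in> W \<and> W \<subseteq> \<Omega> \<and> C1_closure W h1 \<and>
        (\<forall>x\<in>closure W. h1 x > 0) \<and> (\<forall>x\<in>W. h0 x = norm x powr \<alpha> * h1 x))"

text \<open>\<eta> (with derivative \<eta>') solves \<eta>'' = G(\<eta>,\<eta>'), \<eta>(0)=\<eta>0, \<eta>'(0)=\<eta>1 on [0,T[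
  (staying in the domain \<beta> > 0 of G).\<close>
definition ode_sol :: "(real \<Rightarrow> real \<Rightarrow> real) \<Rightarrow> real \<Rightarrow> real \<Rightarrow> ereal
     \<Rightarrow> (real \<Rightarrow> real) \<Rightarrow> (real \<Rightarrow> real) \<Rightarrow> bool" where
  "ode_sol G \<eta>0 \<eta>1 T \<eta> \<eta>' \<longleftrightarrow> 0 < T \<and> \<eta> 0 = \<eta>0 \<and> \<eta>' 0 = \<eta>1 \<and>
     (\<forall>t. 0 \<le> t \<and> ereal t < T \<longrightarrow>
        \<eta> t > 0 \<and>
        (\<eta> has_real_derivative \<eta>' t) (at t within {s. 0 \<le> s \<and> ereal s < T}) \<and>
        (\<eta>' has_real_derivative G (\<eta> t) (\<eta>' t)) (at t within {s. 0 \<le> s \<and> ereal s < T}))"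

definition ode_max_sol :: "(real \<Rightarrow> real \<Rightarrow> real) \<Rightarrow> real \<Rightarrow> real \<Rightarrow> ereal
     \<Rightarrow> (real \<Rightarrow> real) \<Rightarrow> (real \<Rightarrow> real) \<Rightarrow> bool" where
  "ode_max_sol G \<eta>0 \<eta>1 T \<eta> \<eta>' \<longleftrightarrow> ode_sol G \<eta>0 \<eta>1 T \<eta> \<eta>' \<and>
     \<not> (\<exists>T' \<zeta> \<zeta>'. T < T' \<and> ode_sol G \<eta>0 \<eta>1 T' \<zeta> \<zeta>' \<and>
          (\<forall>t. 0 \<le> t \<and> ereal t < T \<longrightarrow> \<zeta> t = \<eta> t))"

definition E1 :: "real \<Rightarrow> real \<Rightarrow> real \<Rightarrow> real" where
  "E1 F \<beta> \<gamma> = \<gamma>^2 / 2 + F * \<beta>"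

definition E2 :: "real \<Rightarrow> real \<Rightarrow> real \<Rightarrow> real \<Rightarrow> real" where
  "E2 F c1 \<beta> \<gamma> = \<gamma>^2 / 2 + F * \<beta> + c1 / (2 * \<beta>^2)"

end

theory Submission
  imports Defs
begin

text \<open>Along a solution, E1 changes at rate \<eta>' (G + F) and E2 at rate \<eta>' (G + F - c1/\<eta>^3).
  Since G + F is the integral of the nonnegative solution q of the variational inequality,
  the first rate is \<le> 0 when \<eta>' \<le> 0; the bound G \<le> c1/\<beta>^3 - F makes the second
  one \<le> 0 when \<eta>' \<ge> 0.\<close>

lemma VI_sol_integral_nonneg:
  assumes "VI_sol \<Omega> h0 \<beta> \<gamma> q"
  shows "0 \<le> (\<integral>x\<in>\<Omega>. q x \<partial>lebesgue)"
proof -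
  obtain gq where "in_K \<Omega> q gq"
    using assms unfolding VI_sol_def by blast
  then have "AE x in lebesgue. x \<in> \<Omega> \<longrightarrow> q x \<ge> 0"
    unfolding in_K_def by blast
  then show ?thesis
    unfolding set_lebesgue_integral_def
    by (intro integral_nonneg_AE) (auto simp: indicator_def)
qed

lemma has_real_derivative_E1:
  assumes "(y has_real_derivative y' t) (at t within S)"
    and "(y' has_real_derivative a) (at t within S)"
  shows "((\<lambda>s. E1 F (y s) (y' s)) has_real_derivative y' t * (a + F)) (at t within S)"
  unfolding E1_def
  by (rule derivative_eq_intros assms refl | simp add: algebra_simps)+

lemma has_real_derivative_E2:
  assumes "(y has_real_derivative y' t) (at t within S)"
    and "(y' has_real_derivative a) (at t within S)"
    and "y t \<noteq> 0"
  shows "((\<lambda>s. E2 F c (y s) (y' s)) has_real_derivative y' t * (a + F - c / y t ^ 3))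
           (at t within S)"
  unfolding E2_def
  by (rule derivative_eq_intros assms refl
      | use assms(3) in \<open>simp add: algebra_simps power_eq_if\<close>)+

theorem lemma4p1:
  fixes \<Omega> :: "(real \<times> real) set" and h0 :: "real \<times> real \<Rightarrow> real"
    and F c1 \<eta>0 \<eta>1 :: real and G :: "real \<Rightarrow> real \<Rightarrow> real"
    and T :: ereal and \<eta> \<eta>' :: "real \<Rightarrow> real"
  assumes \<Omega>: "open \<Omega>" "bounded \<Omega>" "C1_boundary \<Omega>" "(0, 0) \<in> \<Omega>"
    and h0: "C1_closure \<Omega> h0" "\<forall>x\<in>closure \<Omega>. h0 x \<ge> 0" "h0 (0, 0) = 0"
    and cases: "case_I \<Omega> h0 \<or> case_II \<Omega> h0"
    and F: "F > 0"
    and G_exists: "\<forall>\<beta>>0. \<forall>\<gamma>. \<exists>q. VI_sol \<Omega> h0 \<beta> \<gamma> q"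
    and G_def: "\<forall>\<beta>>0. \<forall>\<gamma> q. VI_sol \<Omega> h0 \<beta> \<gamma> q \<longrightarrow>
                   G \<beta> \<gamma> = (\<integral>x\<in>\<Omega>. q x \<partial>lebesgue) - F"
    and c1: "c1 > 0" "\<forall>\<beta>>0. \<forall>\<gamma>\<ge>0. G \<beta> \<gamma> \<le> c1 / \<beta>^3 - F"
    and eta: "\<eta>0 > 0" "ode_max_sol G \<eta>0 \<eta>1 T \<eta> \<eta>'"
  shows "\<forall>t. 0 \<le> t \<and> ereal t < T \<longrightarrow>
           (\<eta>' t \<le> 0 \<longrightarrow> (\<exists>D. ((\<lambda>s. E1 F (\<eta> s) (\<eta>' s)) has_real_derivative D)
                              (at t within {s. 0 \<le> s \<and> ereal s < T}) \<and> D \<le> 0)) \<and>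
           (\<eta>' t \<ge> 0 \<longrightarrow> (\<exists>D. ((\<lambda>s. E2 F c1 (\<eta> s) (\<eta>' s)) has_real_derivative D)
                              (at t within {s. 0 \<le> s \<and> ereal s < T}) \<and> D \<le> 0))"
proof (intro allI impI conjI)
  fix t assume t: "0 \<le> t \<and> ereal t < T"
  have pos: "\<eta> t > 0"
    and d\<eta>: "(\<eta> has_real_derivative \<eta>' t) (at t within {s. 0 \<le> s \<and> ereal s < T})"
    and d\<eta>': "(\<eta>' has_real_derivative G (\<eta> t) (\<eta>' t)) (at t within {s. 0 \<le> s \<and> ereal s < T})"
    using eta(2) t unfolding ode_max_sol_def ode_sol_def by blast+
  obtain q where "VI_sol \<Omega> h0 (\<eta> t) (\<eta>' t) q"
    using G_exists pos by blast
  then have GF: "G (\<eta> t) (\<eta>' t) + F \<ge> 0"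
    using G_def pos VI_sol_integral_nonneg by fastforce
  show "\<exists>D. ((\<lambda>s. E1 F (\<eta> s) (\<eta>' s)) has_real_derivative D)
              (at t within {s. 0 \<le> s \<and> ereal s < T}) \<and> D \<le> 0" if "\<eta>' t \<le> 0"
    using has_real_derivative_E1[OF d\<eta> d\<eta>', of F] GF that
    by (intro exI[of _ "\<eta>' t * (G (\<eta> t) (\<eta>' t) + F)"] conjI)
      (auto intro: mult_nonpos_nonneg)
  show "\<exists>D. ((\<lambda>s. E2 F c1 (\<eta> s) (\<eta>' s)) has_real_derivative D)
              (at t within {s. 0 \<le> s \<and> ereal s < T}) \<and> D \<le> 0" if "\<eta>' t \<ge> 0"
  proof -
    have "G (\<eta> t) (\<eta>' t) + F - c1 / \<eta> t ^ 3 \<le> 0"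
      using c1(2) pos that by fastforce
    then show ?thesis
      using has_real_derivative_E2[OF d\<eta> d\<eta>', of F c1] pos that
      by (intro exI[of _ "\<eta>' t * (G (\<eta> t) (\<eta>' t) + F - c1 / \<eta> t ^ 3)"] conjI)
        (auto intro: mult_nonneg_nonpos)
  qed
qed

end
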